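(* Let $l<u$ be real, $D=[l,u]$, $b>0$, and for $p\in D$ let $C_p = 1-\frac{1}{2}\left(e^{-\frac{p-l}{b}}+e^{-\frac{u-p}{b}}\right)$. Let $z\ge 0$. Then for all $q$ with $q\in D$ and $q+z\in D$ (and $q$ in the interior of the set of such points, so that the derivative is taken there), $$\frac{\partial}{\partial q}\left(\frac{C_{q+z}}{C_q}e^{\frac{z}{b}}\right)\le 0.$$
   Context: $C_p$ equals $\int_l^u \frac{1}{2b}e^{-|x-p|/b}\,dx$ for $p\in D$. *)

theory Defs
  imports "HOL-Analysis.Analysis"
begin

text \<open>Normalising constant C_p of the Laplace mechanism truncated to D = [l,u] with scale b.\<close>
definition Cnorm :: "real \<Rightarrow> real \<Rightarrow> real \<Rightarrow> real \<Rightarrow> real" where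
  "Cnorm l u b p = 1 - (exp (- (p - l) / b) + exp (- (u - p) / b)) / 2"

end

theory Submission
  imports Defs
begin

text \<open>
  Write A = exp (-(q-l)/b), B = exp (-(u-q)/b) and E = exp (z/b) \<ge> 1. Then
  C q = 1 - (A + B)/2 and C (q+z) = 1 - (A/E + B E)/2, with derivatives (A - B)/(2b) and
  (A/E - B E)/(2b). By the quotient rule the sign of the derivative is that of the cross term
  C'(q+z) C q - C (q+z) C' q, and 2bE times it equals -(E - 1)(A(1 - B) + B E (1 - A)),
  which is nonpositive because A, B \<le> 1 on D.
\<close>

definition Cnorm_deriv :: "real \<Rightarrow> real \<Rightarrow> real \<Rightarrow> real \<Rightarrow> real" where
  "Cnorm_deriv l u b p = (exp (- (p - l) / b) - exp (- (u - p) / b)) / (2 * b)"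

lemma Cnorm_has_real_derivative:
  "(Cnorm l u b has_real_derivative Cnorm_deriv l u b p) (at p)"
  unfolding Cnorm_def[abs_def] Cnorm_deriv_def
  by (cases "b = 0") (auto intro!: derivative_eq_intros simp: field_simps)

lemma Cnorm_pos:
  assumes "l < u" and "b > 0" and "p \<in> {l..u}"
  shows "Cnorm l u b p > 0"
proof -
  define A where "A = exp (- (p - l) / b)"
  define B where "B = exp (- (u - p) / b)"
  have "A \<le> 1" "B \<le> 1"
    using assms unfolding A_def B_def by (auto simp: divide_nonpos_pos)
  moreover have "A < 1 \<or> B < 1"
    using assms unfolding A_def B_def by (cases "p = l") (auto simp: divide_neg_pos)
  ultimately have "A + B < 2"
    by linarith
  then show ?thesis
    unfolding Cnorm_def A_def B_def by simp
qed

lemma laplace_cross_term_nonpos: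
  fixes A B E :: real
  assumes "0 \<le> A" "A \<le> 1" "0 \<le> B" "B \<le> 1" "1 \<le> E"
  shows "(A / E - B * E) * (1 - (A + B) / 2) \<le> (1 - (A / E + B * E) / 2) * (A - B)"
proof -
  have "E * ((A / E - B * E) * (1 - (A + B) / 2) - (1 - (A / E + B * E) / 2) * (A - B))
      = - ((E - 1) * (A * (1 - B) + B * E * (1 - A)))"
    using assms by (simp add: field_simps)
  moreover have "(E - 1) * (A * (1 - B) + B * E * (1 - A)) \<ge> 0"
    using assms by (intro mult_nonneg_nonneg add_nonneg_nonneg) auto
  ultimately have "E * ((A / E - B * E) * (1 - (A + B) / 2) - (1 - (A / E + B * E) / 2) * (A - B)) \<le> 0"
    by linarith
  with assms(5) show ?thesis
    by (simp add: mult_le_0_iff)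
qed

lemma Cnorm_shift_cross_le:
  assumes "b > 0" and "z \<ge> 0" and "q \<in> {l..u}" and "q + z \<in> {l..u}"
  shows "Cnorm_deriv l u b (q + z) * Cnorm l u b q \<le> Cnorm l u b (q + z) * Cnorm_deriv l u b q"
proof -
  define A where "A = exp (- (q - l) / b)"
  define B where "B = exp (- (u - q) / b)"
  define E where "E = exp (z / b)"
  have shift_A: "exp (- (q + z - l) / b) = A / E"
    unfolding A_def E_def by (simp add: exp_diff[symmetric] diff_divide_distrib add_divide_distrib)
  have shift_B: "exp (- (u - (q + z)) / b) = B * E"
    unfolding B_def E_def by (simp add: exp_add[symmetric] diff_divide_distrib add_divide_distrib)
  have "A \<le> 1" "B \<le> 1" "1 \<le> E"
    using assms unfolding A_def B_def E_def by (auto simp: divide_nonpos_pos)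
  then have "(A / E - B * E) * (1 - (A + B) / 2) \<le> (1 - (A / E + B * E) / 2) * (A - B)"
    by (intro laplace_cross_term_nonpos) (auto simp: A_def B_def)
  then have "(A / E - B * E) * (1 - (A + B) / 2) / (2 * b)
      \<le> (1 - (A / E + B * E) / 2) * (A - B) / (2 * b)"
    using assms(1) by (simp add: divide_right_mono)
  then show ?thesis
    unfolding Cnorm_def Cnorm_deriv_def shift_A shift_B by (simp add: A_def B_def)
qed

theorem lemmaA2:
  fixes l u b z q :: real
  assumes "l < u" and "b > 0" and "z \<ge> 0"
    and "q \<in> interior {x. x \<in> {l..u} \<and> x + z \<in> {l..u}}"
  shows "deriv (\<lambda>x. Cnorm l u b (x + z) / Cnorm l u b x * exp (z / b)) q \<le> 0"
proof -
  let ?C = "Cnorm l u b" and ?C' = "Cnorm_deriv l u b"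
  have q: "q \<in> {l..u}" "q + z \<in> {l..u}"
    using interior_subset assms(4) by blast+
  have Cq: "?C q > 0"
    using Cnorm_pos[OF assms(1,2) q(1)] .
  have "((\<lambda>x. x + z) has_real_derivative 1) (at q)"
    by (auto intro!: derivative_eq_intros)
  from DERIV_chain2[OF Cnorm_has_real_derivative this]
  have "((\<lambda>x. ?C (x + z)) has_real_derivative ?C' (q + z)) (at q)"
    by simp
  from DERIV_mult[OF DERIV_divide[OF this Cnorm_has_real_derivative] DERIV_const]
  have "((\<lambda>x. ?C (x + z) / ?C x * exp (z / b)) has_real_derivative
      (?C' (q + z) * ?C q - ?C (q + z) * ?C' q) / (?C q * ?C q) * exp (z / b)) (at q)"
    using Cq by simp
  then have "deriv (\<lambda>x. ?C (x + z) / ?C x * exp (z / b)) q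
      = (?C' (q + z) * ?C q - ?C (q + z) * ?C' q) / (?C q * ?C q) * exp (z / b)"
    by (rule DERIV_imp_deriv)
  also have "\<dots> \<le> 0"
    using Cnorm_shift_cross_le[OF assms(2,3) q]
    by (intro mult_nonpos_nonneg divide_nonpos_nonneg) auto
  finally show ?thesis .
qed

end
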